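(* Let $\Omega$ be a smooth bounded domain in $\mathbb{R}^N$, $N\ge 2$, and let $2<p<\infty$ if $N=2$, $2<p<2N/(N-2)$ if $N\ge3$. For each $0<\varepsilon\le1$ let $u^\varepsilon$ be a critical point of \[ J_\varepsilon(u) = \int_\Omega \left[\tfrac12 |\nabla u|^2 + \mathcal{B}\!\left(\tfrac{u-1}{\varepsilon}\right) - \tfrac1p (u-1)_+^p\right] dx,\quad u\in H^1_0(\Omega), \] with $J_\varepsilon(u^\varepsilon)=c_\varepsilon$. Let $A_0>0$ be a constant such that $(u^\varepsilon-1)_+^{p-1}\le A_0$ in $\Omega$ for all $0<\varepsilon\le 1$, and let $\varphi_0>0$ solve $-\Delta\varphi_0=A_0$ in $\Omega$, $\varphi_0=0$ on $\partial\Omega$. Then for $0<\varepsilon\le1$, $u^\varepsilon(x)\le\varphi_0(x)$ for all $x\in\Omega$; in particular $\{u^\varepsilon\ge1\}\subset\{\varphi_0\ge1\}\subset\subset\Omega$.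
   Context: $t_+=\max\{t,0\}$. $\beta:\mathbb{R}\to[0,2]$ is a fixed smooth function with $\beta(t)=0$ for $t\le0$ and $t\ge1$, $\beta(t)>0$ for $0<t<1$, $\int_0^1\beta=1$; $\mathcal{B}(t)=\int_0^t\beta(s)\,ds$. $\Gamma_\varepsilon=\{\gamma\in C([0,1],H^1_0(\Omega)):\gamma(0)=0,\ J_\varepsilon(\gamma(1))<0\}$ and $c_\varepsilon=\inf_{\gamma\in\Gamma_\varepsilon}\max_{u\in\gamma([0,1])}J_\varepsilon(u)$. Critical points of $J_\varepsilon$ are classical solutions of $\Delta u=\frac1\varepsilon\beta(\frac{u-1}{\varepsilon})-(u-1)_+^{p-1}$ in $\Omega$, $u=0$ on $\partial\Omega$. (Such a constant $A_0$ exists since the $u^\varepsilon$ are uniformly bounded.) *)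

theory Defs
  imports "HOL-Analysis.Analysis"
begin

definition pd :: "'a::euclidean_space \<Rightarrow> ('a \<Rightarrow> real) \<Rightarrow> 'a \<Rightarrow> real" where
  "pd b f x = deriv (\<lambda>t. f (x + t *\<^sub>R b)) 0"

definition has_pd :: "'a::euclidean_space \<Rightarrow> ('a \<Rightarrow> real) \<Rightarrow> 'a \<Rightarrow> bool" where
  "has_pd b f x \<longleftrightarrow> (\<lambda>t. f (x + t *\<^sub>R b)) differentiable (at 0)"

fun pds :: "'a::euclidean_space list \<Rightarrow> ('a \<Rightarrow> real) \<Rightarrow> 'a \<Rightarrow> real" where
  "pds [] f = f"
| "pds (b # bs) f = pd b (pds bs f)"

definition C2_on :: "'a::euclidean_space set \<Rightarrow> ('a \<Rightarrow> real) \<Rightarrow> bool" where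
  "C2_on S f \<longleftrightarrow> continuous_on S f
     \<and> (\<forall>b\<in>Basis. (\<forall>x\<in>S. has_pd b f x) \<and> continuous_on S (pd b f))
     \<and> (\<forall>b\<in>Basis. \<forall>c\<in>Basis. (\<forall>x\<in>S. has_pd c (pd b f) x) \<and> continuous_on S (pd c (pd b f)))"

definition smooth_on :: "'a::euclidean_space set \<Rightarrow> ('a \<Rightarrow> real) \<Rightarrow> bool" where
  "smooth_on S f \<longleftrightarrow> (\<forall>bs. set bs \<subseteq> Basis \<longrightarrow>
      continuous_on S (pds bs f) \<and> (\<forall>b\<in>Basis. \<forall>x\<in>S. has_pd b (pds bs f) x))"

definition laplacian :: "('a::euclidean_space \<Rightarrow> real) \<Rightarrow> 'a \<Rightarrow> real" where
  "laplacian f x = (\<Sum>b\<in>Basis. pd b (pd b f) x)"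

definition smooth_bounded_domain :: "'a::euclidean_space set \<Rightarrow> bool" where
  "smooth_bounded_domain \<Omega> \<longleftrightarrow> open \<Omega> \<and> connected \<Omega> \<and> \<Omega> \<noteq> {} \<and> bounded \<Omega> \<and>
     (\<forall>z\<in>frontier \<Omega>. \<exists>U \<psi>. open U \<and> z \<in> U \<and> smooth_on U \<psi> \<and>
        (\<forall>x\<in>U. \<exists>b\<in>Basis. pd b \<psi> x \<noteq> 0) \<and> \<Omega> \<inter> U = {x\<in>U. \<psi> x < 0})"

definition pos_part :: "real \<Rightarrow> real" where
  "pos_part t = max t 0"

end

theory Submission
  imports Defs
begin

text \<open>Weak maximum principle. The difference w = u - \<phi>0 satisfies \<Delta>w \<ge> -A0 + A0 = 0 in \<Omega>
  and w = 0 on the boundary. If w were positive somewhere, then for small \<delta> > 0 the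
  function w + \<delta>|x|^2, which is strictly subharmonic, would attain its maximum over the
  closure of \<Omega> in the interior; but at an interior maximum every pure second derivative,
  hence the Laplacian, is \<le> 0. The compact inclusion of {\<phi>0 \<ge> 1} in \<Omega> holds because
  \<phi>0 is continuous up to the boundary and vanishes there.\<close>

lemma has_pd_has_real_derivative:
  assumes "has_pd b f x"
  shows "((\<lambda>t. f (x + t *\<^sub>R b)) has_real_derivative pd b f x) (at 0)"
  using assms unfolding has_pd_def pd_def by (simp add: DERIV_deriv_iff_real_differentiable)

lemma has_pd_has_real_derivative_shift:
  assumes "has_pd b f (x + t *\<^sub>R b)"
  shows "((\<lambda>s. f (x + s *\<^sub>R b)) has_real_derivative pd b f (x + t *\<^sub>R b)) (at t)"
proof -
  have "((\<lambda>s. f ((x + t *\<^sub>R b) + s *\<^sub>R b)) has_real_derivative pd b f (x + t *\<^sub>R b)) (at 0)"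
    by (rule has_pd_has_real_derivative[OF assms])
  hence "((\<lambda>s. f (x + (s + t) *\<^sub>R b)) has_real_derivative pd b f (x + t *\<^sub>R b)) (at 0)"
    by (simp add: algebra_simps scaleR_add_left)
  thus ?thesis using DERIV_shift[of "\<lambda>s. f (x + s *\<^sub>R b)" _ 0 t] by simp
qed

lemma open_contains_basis_segment:
  fixes x b :: "'a::euclidean_space"
  assumes "open S" "x \<in> S" "b \<in> Basis"
  obtains r where "r > 0" "\<And>t. \<bar>t\<bar> < r \<Longrightarrow> x + t *\<^sub>R b \<in> S"
proof -
  obtain e where e: "e > 0" "ball x e \<subseteq> S" using assms open_contains_ball by blast
  have "x + t *\<^sub>R b \<in> S" if "\<bar>t\<bar> < e" for t
  proof -
    have "dist x (x + t *\<^sub>R b) = \<bar>t\<bar>" using assms(3) by (simp add: dist_norm)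
    thus ?thesis using e that by auto
  qed
  thus ?thesis using e that by blast
qed

lemma local_max_second_derivative_nonpos:
  fixes h h' :: "real \<Rightarrow> real"
  assumes r: "r > 0"
    and dh: "\<And>t. \<bar>t\<bar> < r \<Longrightarrow> (h has_real_derivative h' t) (at t)"
    and dh': "(h' has_real_derivative h'') (at 0)"
    and max: "\<And>t. \<bar>t\<bar> < r \<Longrightarrow> h t \<le> h 0"
  shows "h'' \<le> 0"
proof (rule ccontr)
  assume "\<not> h'' \<le> 0"
  hence h'': "h'' > 0" by simp
  have h'0: "h' 0 = 0"
    by (rule DERIV_local_max[OF dh[of 0] r]) (use r max in auto)
  have "((\<lambda>y. (h' y - h' 0) / (y - 0)) \<longlongrightarrow> h'') (at 0)"
    using dh' by (simp add: has_field_derivative_iff)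
  hence "\<forall>\<^sub>F y in at 0. (h' y - h' 0) / (y - 0) > 0"
    using h'' by (rule order_tendstoD(1))
  then obtain d where d: "d > 0" "\<And>y. y \<noteq> 0 \<Longrightarrow> dist y 0 < d \<Longrightarrow> (h' y - h' 0) / (y - 0) > 0"
    by (auto simp: eventually_at)
  have h'_pos: "h' y > 0" if "0 < y" "y < d" for y
    using d(2)[of y] that h'0 by (auto simp: zero_less_divide_iff)
  define t where "t = min d r / 2"
  have t: "0 < t" "t < d" "t < r" using d r by (auto simp: t_def)
  obtain y where y: "0 < y" "y < t" "h t - h 0 = (t - 0) * h' y"
    using MVT2[of 0 t h h'] t dh by force
  have "h t - h 0 > 0" using h'_pos[of y] y t by simp
  moreover have "h t \<le> h 0" using max t by auto
  ultimately show False by simp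
qed

lemma pd_pd_diff_nonpos_at_max:
  fixes f g :: "'a::euclidean_space \<Rightarrow> real"
  assumes S: "open S" and f: "C2_on S f" and g: "C2_on S g" and z: "z \<in> S" and b: "b \<in> Basis"
    and max: "\<And>y. y \<in> S \<Longrightarrow> f y - g y + c * (norm y)\<^sup>2 \<le> f z - g z + c * (norm z)\<^sup>2"
  shows "pd b (pd b f) z - pd b (pd b g) z + 2 * c \<le> 0"
proof -
  obtain r where r: "r > 0" "\<And>t. \<bar>t\<bar> < r \<Longrightarrow> z + t *\<^sub>R b \<in> S"
    using open_contains_basis_segment[OF S z b] by blast
  have norm_line: "(norm (z + t *\<^sub>R b))\<^sup>2 = z \<bullet> z + 2 * t * (z \<bullet> b) + t\<^sup>2" for t
    unfolding power2_norm_eq_inner using b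
    by (simp add: inner_add_left inner_add_right algebra_simps power2_eq_square inner_commute)
  show ?thesis
  proof (rule local_max_second_derivative_nonpos[where r = r
        and h = "\<lambda>t. f (z + t *\<^sub>R b) - g (z + t *\<^sub>R b) + c * (norm (z + t *\<^sub>R b))\<^sup>2"
        and h' = "\<lambda>t. pd b f (z + t *\<^sub>R b) - pd b g (z + t *\<^sub>R b) + c * (2 * (z \<bullet> b) + 2 * t)"])
    show "r > 0" by fact
  next
    fix t :: real
    assume t: "\<bar>t\<bar> < r"
    have "has_pd b f (z + t *\<^sub>R b)" "has_pd b g (z + t *\<^sub>R b)"
      using f g b r(2)[OF t] by (auto simp: C2_on_def)
    note df = has_pd_has_real_derivative_shift[OF this(1)]
      and dg = has_pd_has_real_derivative_shift[OF this(2)]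
    show "((\<lambda>t. f (z + t *\<^sub>R b) - g (z + t *\<^sub>R b) + c * (norm (z + t *\<^sub>R b))\<^sup>2) has_real_derivative
        pd b f (z + t *\<^sub>R b) - pd b g (z + t *\<^sub>R b) + c * (2 * (z \<bullet> b) + 2 * t)) (at t)"
      unfolding norm_line by (rule derivative_eq_intros df dg | simp)+
  next
    have "has_pd b (pd b f) z" "has_pd b (pd b g) z"
      using f g b z by (auto simp: C2_on_def)
    note df = has_pd_has_real_derivative[OF this(1)]
      and dg = has_pd_has_real_derivative[OF this(2)]
    show "((\<lambda>t. pd b f (z + t *\<^sub>R b) - pd b g (z + t *\<^sub>R b) + c * (2 * (z \<bullet> b) + 2 * t))
        has_real_derivative pd b (pd b f) z - pd b (pd b g) z + 2 * c) (at 0)"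
      by (rule derivative_eq_intros df dg | simp)+
  next
    fix t :: real
    assume "\<bar>t\<bar> < r"
    thus "f (z + t *\<^sub>R b) - g (z + t *\<^sub>R b) + c * (norm (z + t *\<^sub>R b))\<^sup>2
        \<le> f (z + 0 *\<^sub>R b) - g (z + 0 *\<^sub>R b) + c * (norm (z + 0 *\<^sub>R b))\<^sup>2"
      using max r(2) by simp
  qed
qed

lemma laplacian_diff_nonpos_at_max:
  fixes f g :: "'a::euclidean_space \<Rightarrow> real"
  assumes "open S" "C2_on S f" "C2_on S g" "z \<in> S"
    and "\<And>y. y \<in> S \<Longrightarrow> f y - g y + c * (norm y)\<^sup>2 \<le> f z - g z + c * (norm z)\<^sup>2"
  shows "laplacian f z - laplacian g z + real DIM('a) * (2 * c) \<le> 0"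
proof -
  have "(\<Sum>b\<in>Basis. pd b (pd b f) z - pd b (pd b g) z + 2 * c) \<le> 0"
    using pd_pd_diff_nonpos_at_max[OF assms(1-4) _ assms(5)] by (intro sum_nonpos) auto
  thus ?thesis by (simp add: laplacian_def sum.distrib sum_subtractf)
qed

lemma weak_comparison_principle:
  fixes f g :: "'a::euclidean_space \<Rightarrow> real"
  assumes S: "open S" "bounded S"
    and f: "C2_on S f" "continuous_on (closure S) f"
    and g: "C2_on S g" "continuous_on (closure S) g"
    and boundary: "\<And>x. x \<in> frontier S \<Longrightarrow> f x \<le> g x"
    and subharmonic: "\<And>x. x \<in> S \<Longrightarrow> laplacian g x \<le> laplacian f x"
    and x: "x \<in> S"
  shows "f x \<le> g x"
proof (rule ccontr)
  assume "\<not> f x \<le> g x"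
  define M where "M = f x - g x"
  have M: "M > 0" using \<open>\<not> f x \<le> g x\<close> by (simp add: M_def)
  define K where "K = closure S"
  have "compact K" "bounded K" using S by (simp_all add: K_def compact_closure bounded_closure)
  obtain R where R: "\<And>y. y \<in> K \<Longrightarrow> norm y \<le> R"
    using \<open>bounded K\<close> by (auto simp: bounded_iff)
  have xK: "x \<in> K" using x closure_subset unfolding K_def by blast
  have "R \<ge> 0" using R[OF xK] norm_ge_zero[of x] by linarith
  define \<delta> where "\<delta> = M / (2 * (R\<^sup>2 + 1))"
  have \<delta>: "\<delta> > 0" using M unfolding \<delta>_def by (intro divide_pos_pos) (auto intro: add_nonneg_pos)
  have \<delta>R: "\<delta> * R\<^sup>2 < M"
  proof -
    have "R\<^sup>2 / (2 * (R\<^sup>2 + 1)) < 1" by (subst divide_less_eq_1_pos) (auto intro: add_nonneg_pos)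
    hence "M * (R\<^sup>2 / (2 * (R\<^sup>2 + 1))) < M * 1" using M by (intro mult_strict_left_mono)
    thus ?thesis by (simp add: \<delta>_def)
  qed
  define v where "v y = f y - g y + \<delta> * (norm y)\<^sup>2" for y
  have "continuous_on K v" unfolding v_def K_def by (intro continuous_intros f g)
  then obtain z where zK: "z \<in> K" and zmax: "\<And>y. y \<in> K \<Longrightarrow> v y \<le> v z"
    using continuous_attains_sup[OF \<open>compact K\<close>] xK by blast
  have "v x \<ge> M" using \<delta> by (simp add: v_def M_def)
  hence vz: "v z \<ge> M" using zmax[OF xK] by simp
  have zS: "z \<in> S"
  proof (rule ccontr)
    assume "z \<notin> S"
    hence "z \<in> frontier S" using zK S by (simp add: K_def frontier_def interior_open)
    hence "v z \<le> \<delta> * (norm z)\<^sup>2" using boundary by (simp add: v_def)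
    also have "\<dots> \<le> \<delta> * R\<^sup>2" using R[OF zK] \<delta> by (intro mult_left_mono power_mono) auto
    finally show False using \<delta>R vz by simp
  qed
  have "laplacian f z - laplacian g z + real DIM('a) * (2 * \<delta>) \<le> 0"
    using zmax closure_subset
    by (intro laplacian_diff_nonpos_at_max[OF S(1) f(1) g(1) zS]) (auto simp: v_def K_def)
  moreover have "real DIM('a) * (2 * \<delta>) > 0" using \<delta> by simp
  ultimately show False using subharmonic[OF zS] by linarith
qed

lemma closure_superlevel_set_compact_subset:
  fixes \<phi> :: "'a::euclidean_space \<Rightarrow> real"
  assumes S: "open S" "bounded S" and \<phi>: "continuous_on (closure S) \<phi>"
    and boundary: "\<And>x. x \<in> frontier S \<Longrightarrow> \<phi> x < c"
  shows "compact (closure {x\<in>S. \<phi> x \<ge> c})" "closure {x\<in>S. \<phi> x \<ge> c} \<subseteq> S"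
proof -
  have closed: "closed (closure S \<inter> \<phi> -` {c..})"
    by (rule continuous_closed_preimage[OF \<phi>]) auto
  have "closure {x\<in>S. \<phi> x \<ge> c} \<subseteq> closure S \<inter> \<phi> -` {c..}"
    by (rule closure_minimal[OF _ closed]) (use closure_subset in auto)
  moreover have "closure S \<inter> \<phi> -` {c..} \<subseteq> S"
  proof
    fix x
    assume x: "x \<in> closure S \<inter> \<phi> -` {c..}"
    hence "x \<notin> frontier S" using boundary by fastforce
    thus "x \<in> S" using x S by (simp add: frontier_def interior_open)
  qed
  ultimately show "closure {x\<in>S. \<phi> x \<ge> c} \<subseteq> S" by blast
  have "bounded {x\<in>S. \<phi> x \<ge> c}" using S(2) by (rule bounded_subset) auto
  thus "compact (closure {x\<in>S. \<phi> x \<ge> c})" by (simp add: compact_closure)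
qed

theorem lemma4:
  fixes \<Omega> :: "'a::euclidean_space set"
    and p A0 :: real
    and \<beta> :: "real \<Rightarrow> real"
    and u :: "real \<Rightarrow> 'a \<Rightarrow> real"
    and \<phi>0 :: "'a \<Rightarrow> real"
  assumes dim: "DIM('a) \<ge> 2"
    and dom: "smooth_bounded_domain \<Omega>"
    and p_gt: "2 < p"
    and p_sub: "DIM('a) = 2 \<or> p < 2 * real DIM('a) / (real DIM('a) - 2)"
    and beta_smooth: "smooth_on UNIV \<beta>"
    and beta_range: "\<And>t. 0 \<le> \<beta> t \<and> \<beta> t \<le> 2"
    and beta_zero: "\<And>t. t \<le> 0 \<or> t \<ge> 1 \<Longrightarrow> \<beta> t = 0"
    and beta_pos: "\<And>t. 0 < t \<Longrightarrow> t < 1 \<Longrightarrow> \<beta> t > 0"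
    and beta_int: "integral {0..1} \<beta> = 1"
    and u_C2: "\<And>\<epsilon>. 0 < \<epsilon> \<Longrightarrow> \<epsilon> \<le> 1 \<Longrightarrow> C2_on \<Omega> (u \<epsilon>)"
    and u_cont: "\<And>\<epsilon>. 0 < \<epsilon> \<Longrightarrow> \<epsilon> \<le> 1 \<Longrightarrow> continuous_on (closure \<Omega>) (u \<epsilon>)"
    and u_bdry: "\<And>\<epsilon> x. 0 < \<epsilon> \<Longrightarrow> \<epsilon> \<le> 1 \<Longrightarrow> x \<in> frontier \<Omega> \<Longrightarrow> u \<epsilon> x = 0"
    and u_eq: "\<And>\<epsilon> x. 0 < \<epsilon> \<Longrightarrow> \<epsilon> \<le> 1 \<Longrightarrow> x \<in> \<Omega> \<Longrightarrow>
        laplacian (u \<epsilon>) x = (1 / \<epsilon>) * \<beta> ((u \<epsilon> x - 1) / \<epsilon>) - pos_part (u \<epsilon> x - 1) powr (p - 1)"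
    and A0_pos: "A0 > 0"
    and A0_bound: "\<And>\<epsilon> x. 0 < \<epsilon> \<Longrightarrow> \<epsilon> \<le> 1 \<Longrightarrow> x \<in> \<Omega> \<Longrightarrow> pos_part (u \<epsilon> x - 1) powr (p - 1) \<le> A0"
    and phi_C2: "C2_on \<Omega> \<phi>0"
    and phi_cont: "continuous_on (closure \<Omega>) \<phi>0"
    and phi_pos: "\<And>x. x \<in> \<Omega> \<Longrightarrow> \<phi>0 x > 0"
    and phi_eq: "\<And>x. x \<in> \<Omega> \<Longrightarrow> - laplacian \<phi>0 x = A0"
    and phi_bdry: "\<And>x. x \<in> frontier \<Omega> \<Longrightarrow> \<phi>0 x = 0"
  shows "\<forall>\<epsilon>. 0 < \<epsilon> \<and> \<epsilon> \<le> 1 \<longrightarrow>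
           (\<forall>x\<in>\<Omega>. u \<epsilon> x \<le> \<phi>0 x) \<and>
           {x\<in>\<Omega>. u \<epsilon> x \<ge> 1} \<subseteq> {x\<in>\<Omega>. \<phi>0 x \<ge> 1} \<and>
           compact (closure {x\<in>\<Omega>. \<phi>0 x \<ge> 1}) \<and> closure {x\<in>\<Omega>. \<phi>0 x \<ge> 1} \<subseteq> \<Omega>"
proof (intro allI impI)
  fix \<epsilon> :: real
  assume \<epsilon>: "0 < \<epsilon> \<and> \<epsilon> \<le> 1"
  have \<Omega>: "open \<Omega>" "bounded \<Omega>" using dom by (auto simp: smooth_bounded_domain_def)
  have subharmonic: "laplacian \<phi>0 x \<le> laplacian (u \<epsilon>) x" if x: "x \<in> \<Omega>" for x
  proof -
    have "(1 / \<epsilon>) * \<beta> ((u \<epsilon> x - 1) / \<epsilon>) \<ge> 0" using \<epsilon> beta_range by simp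
    thus ?thesis using u_eq[of \<epsilon> x] A0_bound[of \<epsilon> x] phi_eq[OF x] \<epsilon> x by linarith
  qed
  have le: "\<forall>x\<in>\<Omega>. u \<epsilon> x \<le> \<phi>0 x"
    using weak_comparison_principle[OF \<Omega> u_C2 u_cont phi_C2 phi_cont _ subharmonic]
      u_bdry phi_bdry \<epsilon> by auto
  have "{x\<in>\<Omega>. u \<epsilon> x \<ge> 1} \<subseteq> {x\<in>\<Omega>. \<phi>0 x \<ge> 1}" using le by force
  with le closure_superlevel_set_compact_subset[OF \<Omega> phi_cont, of 1] phi_bdry
  show "(\<forall>x\<in>\<Omega>. u \<epsilon> x \<le> \<phi>0 x) \<and> {x\<in>\<Omega>. u \<epsilon> x \<ge> 1} \<subseteq> {x\<in>\<Omega>. \<phi>0 x \<ge> 1} \<and>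
      compact (closure {x\<in>\<Omega>. \<phi>0 x \<ge> 1}) \<and> closure {x\<in>\<Omega>. \<phi>0 x \<ge> 1} \<subseteq> \<Omega>"
    by simp
qed

end
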